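(* Let $\mathcal{N}$ be an acyclic, deterministic, sound negotiation, and let $m,n$ be two nodes with $\mathit{dom}(m)\cap\mathit{dom}(n)=\emptyset$. Then $m\parallel n$ if and only if there exists a run from $C_{\mathit{init}}$ containing both $m$ and $n$, and there is neither a local path from $m$ to $n$ nor a local path from $n$ to $m$.
   Context: A negotiation is a tuple $\mathcal{N}=(\mathit{Proc},N,\mathit{dom},R,\delta)$ where $\mathit{Proc}$ is a finite set of processes, $N$ is a finite set of nodes, $\mathit{dom}:N\to 2^{\mathit{Proc}}\setminus\{\emptyset\}$, there are two distinguished nodes $n_{\mathit{init}},n_{\mathit{fin}}$ with $\mathit{dom}(n_{\mathit{init}})=\mathit{dom}(n_{\mathit{fin}})=\mathit{Proc}$, $R$ is a set of results, each node $n$ has a set $\mathit{out}(n)\subseteq R$ of results (nonempty for $n\neq n_{\mathit{fin}}$), and $\delta(n,a,p)\subseteq N$ is defined and nonempty exactly when $a\in\mathit{out}(n)$ and $p\in\mathit{dom}(n)$, with $p\in\mathit{dom}(n')$ for all $n'\in\delta(n,a,p)$. $\mathcal{N}$ is deterministic if every $\delta(n,a,p)$ is a singleton. A configuration is a map $C$ assigning to each process a nonempty set of nodes; $C_{\mathit{init}}(p)=\{n_{\mathit{init}}\}$, $C_{\mathit{fin}}(p)=\{n_{\mathit{fin}}\}$. A node $n$ is enabled in $C$ if $n\in C(p)$ for all $p\in\mathit{dom}(n)$. If $n$ is enabled and $a\in\mathit{out}(n)$ then $C\xrightarrow{(n,a)}C'$ with $C'(p)=\delta(n,a,p)$ for $p\in\mathit{dom}(n)$,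 $C'(p)=C(p)$ otherwise. A run is a sequence $(n_1,a_1)(n_2,a_2)\cdots$ of such steps, and it contains $n$ if $n=n_i$ for some $i$; a configuration is reachable if some finite run from $C_{\mathit{init}}$ leads to it; $\mathcal{N}$ is sound if every finite run from $C_{\mathit{init}}$ can be extended to a finite run ending in $C_{\mathit{fin}}$. The graph of $\mathcal{N}$ has vertex set $N$ and edges $n\xrightarrow{p,a}n'$ whenever $n'\in\delta(n,a,p)$; $\mathcal{N}$ is acyclic if this graph is; a local path is a path in this graph. $m\parallel n$ means $\mathit{dom}(m)\cap\mathit{dom}(n)=\emptyset$ and some reachable configuration enables both $m$ and $n$. *)

theory Defs
  imports Main
begin

text \<open>A negotiation over processes 'p, nodes 'n and results 'r.
  The transition function is total in HOL; we require it to be empty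
  wherever it is undefined in the paper.\<close>

record ('p, 'n, 'r) negotiation =
  Proc :: "'p set"
  Nodes :: "'n set"
  ndom :: "'n \<Rightarrow> 'p set"
  Res :: "'r set"
  out :: "'n \<Rightarrow> 'r set"
  delta :: "'n \<Rightarrow> 'r \<Rightarrow> 'p \<Rightarrow> 'n set"
  ninit :: 'n
  nfin :: 'n

definition wf_negotiation :: "('p, 'n, 'r) negotiation \<Rightarrow> bool" where
  "wf_negotiation N \<longleftrightarrow>
     finite (Proc N) \<and> finite (Nodes N) \<and>
     ninit N \<in> Nodes N \<and> nfin N \<in> Nodes N \<and> ninit N \<noteq> nfin N \<and>
     (\<forall>n\<in>Nodes N. ndom N n \<subseteq> Proc N \<and> ndom N n \<noteq> {}) \<and>
     ndom N (ninit N) = Proc N \<and> ndom N (nfin N) = Proc N \<and>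
     (\<forall>n\<in>Nodes N. out N n \<subseteq> Res N) \<and>
     (\<forall>n\<in>Nodes N. n \<noteq> nfin N \<longrightarrow> out N n \<noteq> {}) \<and>
     (\<forall>n a p. (n \<in> Nodes N \<and> a \<in> out N n \<and> p \<in> ndom N n) \<longrightarrow>
        delta N n a p \<noteq> {} \<and> delta N n a p \<subseteq> Nodes N \<and>
        (\<forall>n'\<in>delta N n a p. p \<in> ndom N n')) \<and>
     (\<forall>n a p. \<not> (n \<in> Nodes N \<and> a \<in> out N n \<and> p \<in> ndom N n) \<longrightarrow>
        delta N n a p = {})"

definition deterministic :: "('p, 'n, 'r) negotiation \<Rightarrow> bool" where
  "deterministic N \<longleftrightarrow>
     (\<forall>n\<in>Nodes N. \<forall>a\<in>out N n. \<forall>p\<in>ndom N n. \<exists>n'. delta N n a p = {n'})"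

type_synonym ('p, 'n) config = "'p \<Rightarrow> 'n set"

definition Cinit :: "('p, 'n, 'r) negotiation \<Rightarrow> ('p, 'n) config" where
  "Cinit N = (\<lambda>p. if p \<in> Proc N then {ninit N} else {})"

definition Cfin :: "('p, 'n, 'r) negotiation \<Rightarrow> ('p, 'n) config" where
  "Cfin N = (\<lambda>p. if p \<in> Proc N then {nfin N} else {})"

definition enabled :: "('p, 'n, 'r) negotiation \<Rightarrow> ('p, 'n) config \<Rightarrow> 'n \<Rightarrow> bool" where
  "enabled N C n \<longleftrightarrow> n \<in> Nodes N \<and> (\<forall>p\<in>ndom N n. n \<in> C p)"

definition step :: "('p, 'n, 'r) negotiation \<Rightarrow> ('p, 'n) config \<Rightarrow> 'n \<times> 'r \<Rightarrow> ('p, 'n) config \<Rightarrow> bool" where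
  "step N C x C' \<longleftrightarrow> enabled N C (fst x) \<and> snd x \<in> out N (fst x) \<and>
     C' = (\<lambda>p. if p \<in> ndom N (fst x) then delta N (fst x) (snd x) p else C p)"

fun run_from :: "('p, 'n, 'r) negotiation \<Rightarrow> ('p, 'n) config \<Rightarrow> ('n \<times> 'r) list \<Rightarrow> ('p, 'n) config \<Rightarrow> bool" where
  "run_from N C [] C' \<longleftrightarrow> C' = C"
| "run_from N C (x # w) C' \<longleftrightarrow> (\<exists>C''. step N C x C'' \<and> run_from N C'' w C')"

definition reachable :: "('p, 'n, 'r) negotiation \<Rightarrow> ('p, 'n) config \<Rightarrow> bool" where
  "reachable N C \<longleftrightarrow> (\<exists>w. run_from N (Cinit N) w C)"

definition sound :: "('p, 'n, 'r) negotiation \<Rightarrow> bool" where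
  "sound N \<longleftrightarrow> (\<forall>w C. run_from N (Cinit N) w C \<longrightarrow> (\<exists>v. run_from N C v (Cfin N)))"

definition edge :: "('p, 'n, 'r) negotiation \<Rightarrow> 'n \<Rightarrow> 'n \<Rightarrow> bool" where
  "edge N n n' \<longleftrightarrow> (\<exists>a p. n \<in> Nodes N \<and> a \<in> out N n \<and> p \<in> ndom N n \<and> n' \<in> delta N n a p)"

definition acyclic_neg :: "('p, 'n, 'r) negotiation \<Rightarrow> bool" where
  "acyclic_neg N \<longleftrightarrow> (\<forall>n. \<not> (edge N)\<^sup>+\<^sup>+ n n)"

definition local_path :: "('p, 'n, 'r) negotiation \<Rightarrow> 'n \<Rightarrow> 'n \<Rightarrow> bool" where
  "local_path N m n \<longleftrightarrow> (edge N)\<^sup>*\<^sup>* m n"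

definition par :: "('p, 'n, 'r) negotiation \<Rightarrow> 'n \<Rightarrow> 'n \<Rightarrow> bool" where
  "par N m n \<longleftrightarrow> ndom N m \<inter> ndom N n = {} \<and>
     (\<exists>C. reachable N C \<and> enabled N C m \<and> enabled N C n)"

definition run_contains :: "('n \<times> 'r) list \<Rightarrow> 'n \<Rightarrow> bool" where
  "run_contains w n \<longleftrightarrow> n \<in> fst ` set w"

end

theory Submission
  imports Defs
begin

text \<open>
  Forward direction: if \<open>m\<close> and \<open>n\<close> are enabled together, firing them gives the run, and a local
  path \<open>m \<rightarrow>\<^sup>* y \<rightarrow> n\<close> is impossible: by soundness and determinism the run can be continued
  until \<open>y\<close> is enabled, so the token of some process of \<open>n\<close> moves from \<open>n\<close> along local
  edges to \<open>y\<close>, and then \<open>n \<rightarrow>\<^sup>* y \<rightarrow> n\<close> is a cycle.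

  Backward direction: take a run in which \<open>m\<close> fires before \<open>n\<close>. Dropping \<open>m\<close> and every later
  step that causally depends on it, i.e.\ that involves a process whose token is already at a
  local successor of \<open>m\<close>, leaves an executable run. It keeps \<open>m\<close> enabled, and it also enables
  \<open>n\<close>, because without a local path from \<open>m\<close> to \<open>n\<close> no process of \<open>n\<close> was affected.
\<close>

lemma run_from_append:
  "run_from N C (u @ v) C' \<longleftrightarrow> (\<exists>D. run_from N C u D \<and> run_from N D v C')"
  by (induction u arbitrary: C) auto

lemma step_Pair:
  "step N C (x, a) C' \<longleftrightarrow> enabled N C x \<and> a \<in> out N x \<and>
     C' = (\<lambda>p. if p \<in> ndom N x then delta N x a p else C p)"
  unfolding step_def fst_conv snd_conv by (rule refl)

lemma step_update:
  "step N C s C' \<Longrightarrow> C' p = (if p \<in> ndom N (fst s) then delta N (fst s) (snd s) p else C p)"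
  by (simp add: step_def)

lemma step_enabled: "step N C s C' \<Longrightarrow> enabled N C (fst s)"
  by (simp add: step_def)

lemma wf_negotiation_ndom:
  assumes "wf_negotiation N" and "n \<in> Nodes N"
  shows "ndom N n \<subseteq> Proc N \<and> ndom N n \<noteq> {}"
proof -
  have "\<forall>n\<in>Nodes N. ndom N n \<subseteq> Proc N \<and> ndom N n \<noteq> {}"
    using assms(1) unfolding wf_negotiation_def by (elim conjE)
  then show ?thesis using assms(2) by blast
qed

lemma wf_negotiation_ndom_nfin: "wf_negotiation N \<Longrightarrow> ndom N (nfin N) = Proc N"
  unfolding wf_negotiation_def by (elim conjE)

lemma wf_negotiation_out_nonempty:
  "wf_negotiation N \<Longrightarrow> n \<in> Nodes N \<Longrightarrow> n \<noteq> nfin N \<Longrightarrow> out N n \<noteq> {}"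
  unfolding wf_negotiation_def by blast

lemma wf_negotiation_edge_ndom:
  "wf_negotiation N \<Longrightarrow> n \<in> Nodes N \<Longrightarrow> a \<in> out N n \<Longrightarrow> p \<in> ndom N n
    \<Longrightarrow> n' \<in> delta N n a p \<Longrightarrow> p \<in> ndom N n'"
  unfolding wf_negotiation_def by blast

lemma step_successor_edge:
  assumes "step N C (x, a) C'" and "p \<in> ndom N x" and "y \<in> C' p"
  shows "edge N x y"
  using assms unfolding step_Pair edge_def enabled_def by auto

lemma run_from_local_path:
  assumes "run_from N C u C'" and "y \<in> C' p"
  shows "\<exists>x\<in>C p. (edge N)\<^sup>*\<^sup>* x y"
  using assms
proof (induction u arbitrary: C)
  case Nil
  then show ?case by auto
next
  case (Cons s u)
  then obtain C'' where st: "step N C s C''" and run: "run_from N C'' u C'" by auto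
  from Cons.IH[OF run Cons.prems(2)] obtain x where x: "x \<in> C'' p" "(edge N)\<^sup>*\<^sup>* x y" by blast
  show ?case
  proof (cases "p \<in> ndom N (fst s)")
    case True
    then have "fst s \<in> C p" using step_enabled[OF st] by (simp add: enabled_def)
    moreover have "edge N (fst s) x"
      using st True x(1) step_successor_edge[of N C "fst s" "snd s"] by simp
    ultimately show ?thesis using x(2) by (meson converse_rtranclp_into_rtranclp)
  next
    case False
    then show ?thesis using x step_update[OF st, of p] by auto
  qed
qed

lemma run_from_deterministic_singletons:
  assumes "deterministic N" and "run_from N C u C'" and "\<forall>p\<in>Proc N. \<exists>x. C p = {x}"
  shows "\<forall>p\<in>Proc N. \<exists>x. C' p = {x}"
  using assms(2,3)
proof (induction u arbitrary: C)
  case Nil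
  then show ?case by simp
next
  case (Cons s u)
  then obtain C'' where st: "step N C s C''" and run: "run_from N C'' u C'" by auto
  have "\<exists>x. C'' p = {x}" if "p \<in> Proc N" for p
  proof (cases "p \<in> ndom N (fst s)")
    case True
    have "fst s \<in> Nodes N" "snd s \<in> out N (fst s)"
      using st by (auto simp: step_def enabled_def)
    then show ?thesis
      using True step_update[OF st, of p] assms(1) unfolding deterministic_def by auto
  next
    case False
    then show ?thesis using that Cons.prems(2) step_update[OF st, of p] by auto
  qed
  then show ?case using Cons.IH[OF run] by blast
qed

lemma reachable_singletons:
  assumes "deterministic N" and "run_from N (Cinit N) w C" and "p \<in> Proc N"
  shows "\<exists>x. C p = {x}"
  using run_from_deterministic_singletons[OF assms(1,2)] assms(3) by (simp add: Cinit_def)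

lemma run_from_leaves_enabled:
  assumes "run_from N C u C'" and "C p = {z}" and "C' p \<noteq> {z}"
  shows "\<exists>v D. run_from N C v D \<and> enabled N D z"
  using assms
proof (induction u arbitrary: C)
  case Nil
  then show ?case by simp
next
  case (Cons s u)
  then obtain C'' where st: "step N C s C''" and run: "run_from N C'' u C'" by auto
  show ?case
  proof (cases "p \<in> ndom N (fst s)")
    case True
    then have "fst s = z" using step_enabled[OF st] Cons.prems(2) by (auto simp: enabled_def)
    then show ?thesis using step_enabled[OF st] run_from.simps(1) by blast
  next
    case False
    then have "C'' p = {z}" using step_update[OF st, of p] Cons.prems(2) by simp
    from Cons.IH[OF run this Cons.prems(3)] obtain v D where "run_from N C'' v D" "enabled N D z"
      by blast
    then show ?thesis using st by (metis run_from.simps(2))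
  qed
qed

text \<open>
  After firing \<open>y\<close>, its successor \<open>z\<close> on process \<open>p\<close> is the only token of \<open>p\<close>; soundness
  lets the run reach \<open>Cfin\<close>, and the token must leave \<open>z\<close> on the way (unless \<open>z = nfin\<close>).
\<close>
lemma sound_local_path_enabled:
  assumes wf: "wf_negotiation N" and det: "deterministic N" and snd: "sound N"
    and path: "(edge N)\<^sup>*\<^sup>* x y"
    and run: "run_from N (Cinit N) w C" and en: "enabled N C x"
  shows "\<exists>v C'. run_from N C v C' \<and> enabled N C' y"
  using path
proof (induction rule: rtranclp_induct)
  case base
  then show ?case using en run_from.simps(1) by blast
next
  case (step y z)
  then obtain v C' where v: "run_from N C v C'" "enabled N C' y" by blast
  from step.hyps(2) obtain a p where e: "y \<in> Nodes N" "a \<in> out N y" "p \<in> ndom N y" "z \<in> delta N y a p"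
    unfolding edge_def by blast
  define C'' where "C'' = (\<lambda>q. if q \<in> ndom N y then delta N y a q else C' q)"
  have "step N C' (y, a) C''" using v e by (simp add: step_Pair C''_def)
  then have run_y: "run_from N C (v @ [(y, a)]) C''" using v by (auto simp: run_from_append)
  have "delta N y a p = {z}" using det e unfolding deterministic_def by fastforce
  then have pz: "C'' p = {z}" using e(3) by (simp add: C''_def)
  have "run_from N (Cinit N) (w @ v @ [(y, a)]) C''" using run run_y by (auto simp: run_from_append)
  with snd obtain u where u: "run_from N C'' u (Cfin N)" unfolding sound_def by blast
  have p: "p \<in> Proc N" using wf_negotiation_ndom[OF wf e(1)] e(3) by blast
  show ?case
  proof (cases "z = nfin N")
    case True
    then have "enabled N (Cfin N) z"
      using wf unfolding enabled_def Cfin_def wf_negotiation_def by auto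
    moreover have "run_from N C (v @ [(y, a)] @ u) (Cfin N)"
      using run_y u by (auto simp: run_from_append)
    ultimately show ?thesis by blast
  next
    case False
    then have "Cfin N p \<noteq> {z}" using p by (simp add: Cfin_def)
    from run_from_leaves_enabled[OF u pz this] obtain u' D
      where "run_from N C'' u' D" "enabled N D z" by blast
    moreover from this(1) have "run_from N C (v @ [(y, a)] @ u') D"
      using run_y by (auto simp: run_from_append)
    ultimately show ?thesis by blast
  qed
qed

lemma enabled_no_local_path:
  assumes wf: "wf_negotiation N" and det: "deterministic N" and snd: "sound N"
    and ac: "acyclic_neg N" and run: "run_from N (Cinit N) w C"
    and em: "enabled N C m" and en: "enabled N C n" and "m \<noteq> n"
  shows "\<not> local_path N m n"
proof
  assume "local_path N m n"
  then obtain y where my: "(edge N)\<^sup>*\<^sup>* m y" and yn: "edge N y n"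
    using \<open>m \<noteq> n\<close> unfolding local_path_def by (metis rtranclp.cases)
  from sound_local_path_enabled[OF wf det snd my run em] obtain v C'
    where v: "run_from N C v C'" "enabled N C' y" by blast
  from yn obtain a q where e: "y \<in> Nodes N" "a \<in> out N y" "q \<in> ndom N y" "n \<in> delta N y a q"
    unfolding edge_def by blast
  have "y \<in> C' q" using v(2) e(3) unfolding enabled_def by blast
  from run_from_local_path[OF v(1) this] obtain x where x: "x \<in> C q" "(edge N)\<^sup>*\<^sup>* x y" by blast
  have "n \<in> C q" using en wf_negotiation_edge_ndom[OF wf e] unfolding enabled_def by blast
  moreover obtain x0 where "C q = {x0}"
    using reachable_singletons[OF det run] wf_negotiation_ndom[OF wf e(1)] e(3) by blast
  ultimately have "x = n" using x(1) by simp
  then have "(edge N)\<^sup>+\<^sup>+ n n" using x(2) yn by (meson rtranclp_into_tranclp1)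
  with ac show False unfolding acyclic_neg_def by blast
qed

definition at_successors :: "('p, 'n, 'r) negotiation \<Rightarrow> 'n \<Rightarrow> 'p set \<Rightarrow> ('p, 'n) config \<Rightarrow> bool"
  where "at_successors N m T C \<longleftrightarrow> (\<forall>q\<in>T. \<forall>x\<in>C q. (edge N)\<^sup>*\<^sup>* m x)"

text \<open>
  \<open>C\<close> is the configuration of the original run, \<open>E\<close> that of the run with the dependent steps
  removed, and \<open>T\<close> the processes on which they may differ. A step touching \<open>T\<close> depends on
  \<open>m\<close>: it is dropped and its processes join \<open>T\<close>. Any other step is also enabled in \<open>E\<close>.
\<close>
lemma step_postpone:
  assumes st: "step N C (x, a) C'" and T: "at_successors N m T C"
    and agree: "\<forall>q. q \<notin> T \<longrightarrow> E q = C q"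
  shows "\<exists>v E' T'. run_from N E v E' \<and> T \<subseteq> T' \<and> at_successors N m T' C'
     \<and> (\<forall>q. q \<notin> T' \<longrightarrow> E' q = C' q) \<and> (\<forall>q\<in>T. E' q = E q)"
proof (cases "ndom N x \<inter> T = {}")
  case False
  then obtain q where "q \<in> ndom N x" "q \<in> T" by blast
  then have mx: "(edge N)\<^sup>*\<^sup>* m x"
    using T step_enabled[OF st] unfolding at_successors_def enabled_def by auto
  have "at_successors N m (T \<union> ndom N x) C'"
    unfolding at_successors_def
  proof (intro ballI)
    fix q y assume "q \<in> T \<union> ndom N x" and y: "y \<in> C' q"
    show "(edge N)\<^sup>*\<^sup>* m y"
    proof (cases "q \<in> ndom N x")
      case True
      then show ?thesis using mx step_successor_edge[OF st True y] by auto
    next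
      case False
      then show ?thesis
        using \<open>q \<in> T \<union> ndom N x\<close> y T step_update[OF st, of q] unfolding at_successors_def by auto
    qed
  qed
  moreover have "\<forall>q. q \<notin> T \<union> ndom N x \<longrightarrow> E q = C' q"
    using agree step_update[OF st] by auto
  ultimately show ?thesis by (intro exI[of _ "[]"] exI[of _ E] exI[of _ "T \<union> ndom N x"]) auto
next
  case True
  define E' where "E' = (\<lambda>p. if p \<in> ndom N x then delta N x a p else E p)"
  have "enabled N E x" using step_enabled[OF st] True agree unfolding enabled_def by auto
  then have "step N E (x, a) E'" using st by (simp add: step_Pair E'_def)
  then have "run_from N E [(x, a)] E'" by simp
  moreover have "at_successors N m T C'"
    using T True step_update[OF st] unfolding at_successors_def by auto
  moreover have "\<forall>q. q \<notin> T \<longrightarrow> E' q = C' q"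
    using agree step_update[OF st] by (auto simp: E'_def)
  moreover have "\<forall>q\<in>T. E' q = E q" using True by (auto simp: E'_def)
  ultimately show ?thesis by blast
qed

lemma run_from_postpone:
  assumes "run_from N C u C'" and "at_successors N m T C"
    and "\<forall>q. q \<notin> T \<longrightarrow> E q = C q"
  shows "\<exists>v E' T'. run_from N E v E' \<and> at_successors N m T' C'
     \<and> (\<forall>q. q \<notin> T' \<longrightarrow> E' q = C' q) \<and> (\<forall>q\<in>T. E' q = E q)"
  using assms
proof (induction u arbitrary: C T E)
  case Nil
  then show ?case by (intro exI[of _ "[]"] exI[of _ E] exI[of _ T]) auto
next
  case (Cons s u)
  then obtain C1 where st: "step N C s C1" and run: "run_from N C1 u C'" by auto
  from st have "step N C (fst s, snd s) C1" by simp
  from step_postpone[OF this Cons.prems(2,3)]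
  obtain v1 E1 T1 where s1: "run_from N E v1 E1" "T \<subseteq> T1" "at_successors N m T1 C1"
    "\<forall>q. q \<notin> T1 \<longrightarrow> E1 q = C1 q" "\<forall>q\<in>T. E1 q = E q" by blast
  from Cons.IH[OF run s1(3,4)] obtain v2 E2 T2 where s2: "run_from N E1 v2 E2"
    "at_successors N m T2 C'" "\<forall>q. q \<notin> T2 \<longrightarrow> E2 q = C' q" "\<forall>q\<in>T1. E2 q = E1 q" by blast
  have "run_from N E (v1 @ v2) E2" using s1(1) s2(1) by (auto simp: run_from_append)
  moreover have "\<forall>q\<in>T. E2 q = E q" using s1(2,5) s2(4) by auto
  ultimately show ?case using s2(2,3) by blast
qed

lemma run_enables_independent_nodes:
  assumes run: "run_from N (Cinit N) (w1 @ (m, a) # w2) C" and "run_contains w2 n"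
    and no_path: "\<not> local_path N m n"
  shows "\<exists>E. reachable N E \<and> enabled N E m \<and> enabled N E n"
proof -
  from run obtain D D1 where run1: "run_from N (Cinit N) w1 D" and st: "step N D (m, a) D1"
    and run2: "run_from N D1 w2 C" by (auto simp: run_from_append)
  from \<open>run_contains w2 n\<close> obtain b where "(n, b) \<in> set w2" unfolding run_contains_def by auto
  then obtain w3 w4 where "w2 = w3 @ (n, b) # w4" by (meson split_list)
  with run2 obtain D2 D3 where run3: "run_from N D1 w3 D2" and "step N D2 (n, b) D3"
    by (auto simp: run_from_append)
  then have enn: "enabled N D2 n" using step_enabled[of N D2 "(n, b)"] by simp
  have enm: "enabled N D m" using step_enabled[OF st] by simp
  have "at_successors N m (ndom N m) D1"
    using step_successor_edge[OF st] unfolding at_successors_def by blast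
  moreover have "\<forall>q. q \<notin> ndom N m \<longrightarrow> D q = D1 q" using step_update[OF st] by simp
  ultimately obtain v E T where post: "run_from N D v E" "at_successors N m T D2"
    "\<forall>q. q \<notin> T \<longrightarrow> E q = D2 q" "\<forall>q\<in>ndom N m. E q = D q"
    by (elim run_from_postpone[OF run3, elim_format] exE conjE)
  have "run_from N (Cinit N) (w1 @ v) E" using run1 post(1) by (auto simp: run_from_append)
  then have "reachable N E" unfolding reachable_def by blast
  moreover have "enabled N E m" using enm post(4) unfolding enabled_def by auto
  moreover have "enabled N E n"
    unfolding enabled_def
  proof (intro conjI ballI)
    show "n \<in> Nodes N" using enn unfolding enabled_def by blast
  next
    fix p assume "p \<in> ndom N n"
    then have "n \<in> D2 p" using enn unfolding enabled_def by blast
    moreover from this have "p \<notin> T"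
      using post(2) no_path unfolding at_successors_def local_path_def by blast
    ultimately show "n \<in> E p" using post(3) by auto
  qed
  ultimately show ?thesis by blast
qed

lemma wf_negotiation_disjoint_ndom:
  assumes wf: "wf_negotiation N" and "n \<in> Nodes N" and disj: "ndom N m \<inter> ndom N n = {}"
  shows "m \<noteq> n" and "m \<noteq> nfin N"
proof -
  have "ndom N n \<subseteq> Proc N" "ndom N n \<noteq> {}" using wf_negotiation_ndom[OF wf \<open>n \<in> Nodes N\<close>] by auto
  then show "m \<noteq> n" and "m \<noteq> nfin N" using disj wf_negotiation_ndom_nfin[OF wf] by auto
qed

lemma enabled_disjoint_run_contains:
  assumes wf: "wf_negotiation N" and run: "run_from N (Cinit N) w C"
    and em: "enabled N C m" and en: "enabled N C n" and disj: "ndom N m \<inter> ndom N n = {}"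
  shows "\<exists>w C. run_from N (Cinit N) w C \<and> run_contains w m \<and> run_contains w n"
proof -
  have nodes: "m \<in> Nodes N" "n \<in> Nodes N" using em en unfolding enabled_def by auto
  have "m \<noteq> nfin N" using wf_negotiation_disjoint_ndom[OF wf nodes(2) disj] by blast
  moreover have "n \<noteq> nfin N" using wf_negotiation_disjoint_ndom[OF wf nodes(1)] disj by blast
  ultimately have "out N m \<noteq> {}" "out N n \<noteq> {}"
    using wf_negotiation_out_nonempty[OF wf] nodes by auto
  then obtain a b where ab: "a \<in> out N m" "b \<in> out N n" by blast
  define C1 where "C1 = (\<lambda>p. if p \<in> ndom N m then delta N m a p else C p)"
  define C2 where "C2 = (\<lambda>p. if p \<in> ndom N n then delta N n b p else C1 p)"
  have "step N C (m, a) C1" using em ab by (simp add: step_Pair C1_def)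
  moreover have "enabled N C1 n" using en disj unfolding enabled_def C1_def by auto
  then have "step N C1 (n, b) C2" using ab by (simp add: step_Pair C2_def)
  ultimately have "run_from N (Cinit N) (w @ [(m, a), (n, b)]) C2"
    using run by (auto simp: run_from_append)
  moreover have "run_contains (w @ [(m, a), (n, b)]) m" "run_contains (w @ [(m, a), (n, b)]) n"
    unfolding run_contains_def by force+
  ultimately show ?thesis by blast
qed

lemma run_contains_split:
  assumes "run_contains w m" and "run_contains w n" and "m \<noteq> n"
  obtains w1 a w2 where "w = w1 @ (m, a) # w2" "run_contains w2 n"
  | w1 b w2 where "w = w1 @ (n, b) # w2" "run_contains w2 m"
proof -
  from assms(1) obtain a where "(m, a) \<in> set w" unfolding run_contains_def by auto
  then obtain w1 w2 where w: "w = w1 @ (m, a) # w2" by (meson split_list)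
  show ?thesis
  proof (cases "run_contains w2 n")
    case True
    then show ?thesis using that(1) w by blast
  next
    case False
    then have "n \<in> fst ` set w1" using assms w unfolding run_contains_def by auto
    then obtain b where "(n, b) \<in> set w1" by auto
    then obtain w3 w4 where "w1 = w3 @ (n, b) # w4" by (meson split_list)
    then show ?thesis using that(2)[of w3 b "w4 @ (m, a) # w2"] w by (auto simp: run_contains_def)
  qed
qed

lemma run_contains_coenabled:
  assumes run: "run_from N (Cinit N) w C" and "run_contains w m" and "run_contains w n"
    and "m \<noteq> n" and no_path: "\<not> local_path N m n" "\<not> local_path N n m"
  shows "\<exists>E. reachable N E \<and> enabled N E m \<and> enabled N E n"
proof (rule run_contains_split[OF assms(2-4)])
  fix w1 a w2 assume "w = w1 @ (m, a) # w2" and "run_contains w2 n"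
  then show ?thesis using run_enables_independent_nodes[OF _ _ no_path(1)] run by simp
next
  fix w1 b w2 assume "w = w1 @ (n, b) # w2" and "run_contains w2 m"
  then have "\<exists>E. reachable N E \<and> enabled N E n \<and> enabled N E m"
    using run_enables_independent_nodes[OF _ _ no_path(2)] run by simp
  then show ?thesis by blast
qed

theorem proposition6p3:
  fixes N :: "('p, 'n, 'r) negotiation" and m n :: 'n
  assumes "wf_negotiation N" and "acyclic_neg N" and "deterministic N" and "sound N"
    and "m \<in> Nodes N" and "n \<in> Nodes N"
    and "ndom N m \<inter> ndom N n = {}"
  shows "par N m n \<longleftrightarrow>
     ((\<exists>w C. run_from N (Cinit N) w C \<and> run_contains w m \<and> run_contains w n) \<and>
      \<not> local_path N m n \<and> \<not> local_path N n m)"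
proof -
  have "m \<noteq> n" using wf_negotiation_disjoint_ndom[OF assms(1,6,7)] by blast
  show ?thesis
  proof
    assume "par N m n"
    then obtain w C where run: "run_from N (Cinit N) w C" and "enabled N C m" "enabled N C n"
      unfolding par_def reachable_def by blast
    then show "(\<exists>w C. run_from N (Cinit N) w C \<and> run_contains w m \<and> run_contains w n) \<and>
        \<not> local_path N m n \<and> \<not> local_path N n m"
      using enabled_disjoint_run_contains[OF assms(1) run _ _ assms(7)]
        enabled_no_local_path[OF assms(1,3,4,2) run] \<open>m \<noteq> n\<close> by simp
  next
    assume "(\<exists>w C. run_from N (Cinit N) w C \<and> run_contains w m \<and> run_contains w n) \<and>
        \<not> local_path N m n \<and> \<not> local_path N n m"
    then show "par N m n"
      using run_contains_coenabled[OF _ _ _ \<open>m \<noteq> n\<close>] assms(7) unfolding par_def by blast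
  qed
qed

end
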